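(* Consider a human–algorithm system (as defined in the context). Let $i^+\in\arg\max_i c(a_i,h_i)$ and $i^-\in\arg\min_i c(a_i,h_i)$. Let $\epsilon_a=\max_i a_i-\min_i a_i$, $\epsilon_h=\max_i h_i-\min_i h_i$ and $\epsilon_c=c(a_{i^+},h_{i^+})-c(a_{i^-},h_{i^-})$ be the loss disparities of the algorithm, the unaided human, and the combined system. If either (i) $h_{i^+}\le a_{i^+}$ and $h_{i^-}\ge a_{i^-}$, or (ii) $h_{i^+}\ge a_{i^+}$ and $h_{i^-}\le a_{i^-}$, then $\epsilon_c\le\max(\epsilon_a,\epsilon_h)$.
   Context: A human–algorithm system consists of: an integer $N\ge1$ (number of regimes); probabilities $p_1,\dots,p_N\ge 0$ with $\sum_i p_i=1$; algorithmic losses $a_1,\dots,a_N\ge 0$ and unaided-human losses $h_1,\dots,h_N\ge0$; and a combining function $c:[0,\infty)^2\to\mathbb{R}$ satisfying $\min(a,h)\le c(a,h)\le\max(a,h)$ for all $a,h\ge0$, where $c(a_i,h_i)$ is the loss of the combined system in regime $i$. *)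

theory Defs
  imports Main "HOL.Real"
begin

end

theory Submission
  imports Defs
begin

text \<open>The combined loss lies between the algorithmic and the human loss. In case (i) this gives
  \<open>c(a i\<^sup>+, h i\<^sup>+) \<le> a i\<^sup>+\<close> and \<open>c(a i\<^sup>-, h i\<^sup>-) \<ge> a i\<^sup>-\<close>, so the combined disparity
  is at most that of the algorithm; case (ii) is the same with \<open>h\<close> in place of \<open>a\<close>.\<close>

lemma diff_le_Max_minus_Min:
  fixes f :: "'a \<Rightarrow> 'b::linordered_ab_group_add"
  assumes "finite S" "i \<in> S" "j \<in> S" "u \<le> f i" "f j \<le> v"
  shows "u - v \<le> Max (f ` S) - Min (f ` S)"
proof -
  have "f i \<le> Max (f ` S)" "Min (f ` S) \<le> f j"
    using assms(1-3) by auto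
  with assms(4,5) show ?thesis
    by (meson diff_mono order_trans)
qed

theorem lemma10:
  fixes N :: nat and p a h :: "nat \<Rightarrow> real" and c :: "real \<Rightarrow> real \<Rightarrow> real"
    and ip im :: nat
  assumes N: "N \<ge> 1"
    and p_nonneg: "\<forall>i\<in>{1..N}. p i \<ge> 0"
    and p_sum: "(\<Sum>i=1..N. p i) = 1"
    and a_nonneg: "\<forall>i\<in>{1..N}. a i \<ge> 0"
    and h_nonneg: "\<forall>i\<in>{1..N}. h i \<ge> 0"
    and c_bounds: "\<forall>x y. x \<ge> 0 \<longrightarrow> y \<ge> 0 \<longrightarrow> min x y \<le> c x y \<and> c x y \<le> max x y"
    and ip: "ip \<in> {1..N}" "\<forall>i\<in>{1..N}. c (a i) (h i) \<le> c (a ip) (h ip)"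
    and im: "im \<in> {1..N}" "\<forall>i\<in>{1..N}. c (a im) (h im) \<le> c (a i) (h i)"
    and cases: "(h ip \<le> a ip \<and> h im \<ge> a im) \<or> (h ip \<ge> a ip \<and> h im \<le> a im)"
  shows "c (a ip) (h ip) - c (a im) (h im)
           \<le> max (Max (a ` {1..N}) - Min (a ` {1..N})) (Max (h ` {1..N}) - Min (h ` {1..N}))"
proof -
  have c_between: "min (a i) (h i) \<le> c (a i) (h i) \<and> c (a i) (h i) \<le> max (a i) (h i)"
    if "i \<in> {1..N}" for i
    using c_bounds a_nonneg h_nonneg that by simp
  from cases show ?thesis
  proof
    assume "h ip \<le> a ip \<and> h im \<ge> a im"
    then have "c (a ip) (h ip) \<le> a ip" "a im \<le> c (a im) (h im)"
      using c_between[OF ip(1)] c_between[OF im(1)] by auto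
    then have "c (a ip) (h ip) - c (a im) (h im) \<le> Max (a ` {1..N}) - Min (a ` {1..N})"
      by (intro diff_le_Max_minus_Min[OF finite_atLeastAtMost ip(1) im(1)])
    then show ?thesis by linarith
  next
    assume "h ip \<ge> a ip \<and> h im \<le> a im"
    then have "c (a ip) (h ip) \<le> h ip" "h im \<le> c (a im) (h im)"
      using c_between[OF ip(1)] c_between[OF im(1)] by auto
    then have "c (a ip) (h ip) - c (a im) (h im) \<le> Max (h ` {1..N}) - Min (h ` {1..N})"
      by (intro diff_le_Max_minus_Min[OF finite_atLeastAtMost ip(1) im(1)])
    then show ?thesis by linarith
  qed
qed

end
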